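(* Let $\Lambda,r,\alpha$ be positive integers with $\alpha=\Lambda-r$ and $r\in[\Lambda-1]$. For the MADC model with combinatorial topology (CT) with $\Lambda$ mapper nodes, $K=\binom{\Lambda}{\alpha}$ reducer nodes and computation load $r$, the achievable communication load $L(r,\alpha)=\frac{\binom{\Lambda-\alpha}{r}}{\binom{\Lambda}{r}(\binom{r+\alpha}{r}-1)}$ coincides with the lower bound $L^{lb}_{new}(r)$ (taking $K_\alpha=1$ and $K_{\alpha'}=0$ for $\alpha'\neq\alpha$), both being equal to $$\frac{1}{\binom{r+\alpha}{r}\left(\binom{r+\alpha}{r}-1\right)}.$$ Hence this communication load is optimal for the CT model (in the homogeneous setting where every file is stored at exactly $r$ mapper nodes) when $\alpha=\Lambda-r$.
   Context: Notation: $[n]=\{1,\dots,n\}$. Combinatorial topology (CT): $\binom{\Lambda}{r}$ batches $B_T$, $T\subset[0,\Lambda)$, $|T|=r$; mapper node $\lambda$ stores $B_T$ iff $\lambda\in T$; one reducer node for each $\alpha$-subset $U$ of the $\Lambda$ mapper nodes, connected exactly to the mappers in $U$, each reducer computing $Q/K$ disjoint output functions; the communication load is the total number of broadcast bits divided by $QNt$, where $N$ is the number of files and $t$ the IV length. $L^{lb}_{new}(r)=\frac{\sum_{\alpha'\in[\Lambda-r]}K_{\alpha'}\binom{\Lambda-r}{\alpha'}}{K\sum_{\alpha'\in[\Lambda-r]}K_{\alpha'}(\binom{\Lambda}{\alpha'}-\binom{\Lambda-r}{\alpha'})}$ is the lower bound on the optimal communication load for MADC models with GC-MRG connectivity (for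 each $\alpha'\in[\Lambda-r]$ and each $\alpha'$-subset of mappers, $K_{\alpha'}$ reducer nodes connected exactly to it; $K=\sum_{\alpha'}K_{\alpha'}\binom{\Lambda}{\alpha'}$) in which every file is stored at exactly $r$ mapper nodes. *)

theory Defs
  imports Complex_Main
begin

definition L_ach :: "nat \<Rightarrow> nat \<Rightarrow> nat \<Rightarrow> real" where
  "L_ach Lam r \<alpha> =
     real (Lam - \<alpha> choose r) / (real (Lam choose r) * (real (r + \<alpha> choose r) - 1))"

definition K_total :: "nat \<Rightarrow> nat \<Rightarrow> (nat \<Rightarrow> nat) \<Rightarrow> nat" where
  "K_total Lam r Kf = (\<Sum>a\<in>{1..Lam - r}. Kf a * (Lam choose a))"

definition L_lb_new :: "nat \<Rightarrow> nat \<Rightarrow> (nat \<Rightarrow> nat) \<Rightarrow> real" where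
  "L_lb_new Lam r Kf =
     (\<Sum>a\<in>{1..Lam - r}. real (Kf a) * real (Lam - r choose a)) /
     (real (K_total Lam r Kf) *
      (\<Sum>a\<in>{1..Lam - r}. real (Kf a) * (real (Lam choose a) - real (Lam - r choose a))))"

end

theory Submission
  imports Defs
begin

text \<open>With \<open>\<alpha> = \<Lambda> - r\<close> every binomial coefficient in both loads is either
  \<open>\<Lambda> choose r = \<Lambda> choose \<alpha>\<close> or \<open>\<alpha> choose \<alpha> = r choose r = 1\<close>, so both collapse
  to \<open>1 / (C (C - 1))\<close> with \<open>C = (r + \<alpha>) choose r\<close>. On the lower-bound side a single
  nonzero multiplicity \<open>K\<^sub>\<alpha> = 1\<close> reduces every sum over \<open>\<alpha>'\<close> to its \<open>\<alpha>\<close>-term.\<close>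

lemma sum_single_multiplicity:
  fixes f :: "nat \<Rightarrow> 'b::semiring_1"
  assumes "\<alpha> \<in> A" and "finite A"
  shows "(\<Sum>a\<in>A. of_nat (if a = \<alpha> then 1 else 0) * f a) = f \<alpha>"
  using assms by (simp add: if_distrib[of "\<lambda>k. of_nat k * _"] sum.delta cong: if_cong)

lemma K_total_single_multiplicity:
  assumes "\<alpha> \<in> {1..Lam - r}"
  shows "K_total Lam r (\<lambda>a. if a = \<alpha> then 1 else 0) = Lam choose \<alpha>"
  using sum_single_multiplicity[OF assms, of "\<lambda>a. Lam choose a"]
  by (simp add: K_total_def)

lemma L_lb_new_single_multiplicity:
  assumes "\<alpha> \<in> {1..Lam - r}"
  shows "L_lb_new Lam r (\<lambda>a. if a = \<alpha> then 1 else 0) =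
    real (Lam - r choose \<alpha>) /
      (real (Lam choose \<alpha>) * (real (Lam choose \<alpha>) - real (Lam - r choose \<alpha>)))"
  using sum_single_multiplicity[OF assms, where 'b = real]
  by (simp add: L_lb_new_def K_total_single_multiplicity[OF assms] del: of_nat_1)

lemma L_ach_complementary:
  "L_ach (r + \<alpha>) r \<alpha> =
     1 / (real (r + \<alpha> choose r) * (real (r + \<alpha> choose r) - 1))"
  by (simp add: L_ach_def)

lemma L_lb_new_complementary:
  assumes "0 < \<alpha>"
  shows "L_lb_new (r + \<alpha>) r (\<lambda>a. if a = \<alpha> then 1 else 0) =
     1 / (real (r + \<alpha> choose r) * (real (r + \<alpha> choose r) - 1))"
proof -
  have "\<alpha> \<in> {1..r + \<alpha> - r}" using assms by simp
  moreover have "r + \<alpha> choose \<alpha> = r + \<alpha> choose r"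
    using binomial_symmetric[of r "r + \<alpha>"] by simp
  ultimately show ?thesis by (simp add: L_lb_new_single_multiplicity)
qed

theorem corollary2:
  fixes Lam r \<alpha> :: nat
  assumes "1 \<le> r" and "r \<le> Lam - 1" and "0 < \<alpha>" and "\<alpha> = Lam - r"
  defines "Kf \<equiv> (\<lambda>a. if a = \<alpha> then 1 else 0 :: nat)"
  shows "K_total Lam r Kf = Lam choose \<alpha>
    \<and> L_ach Lam r \<alpha> = L_lb_new Lam r Kf
    \<and> L_ach Lam r \<alpha> =
        1 / (real (r + \<alpha> choose r) * (real (r + \<alpha> choose r) - 1))"
proof -
  have Lam: "Lam = r + \<alpha>" using assms(3,4) by linarith
  have "K_total Lam r Kf = Lam choose \<alpha>"
    unfolding Kf_def using assms(3,4) by (intro K_total_single_multiplicity) simp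
  then show ?thesis
    unfolding Lam Kf_def
    using L_ach_complementary L_lb_new_complementary[OF assms(3)] by simp
qed

end
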